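(* Let $I,J,t\in\mathbb{N}$ and $f:\{0,1\}^d\to\{0,1\}$ arbitrary, and let $\eta=\Pr_{x,y,z\sim\{0,1\}^d}[T_f(x,y,z)=1]$ for independent uniform $x,y,z$. If $z$ and $x_i^{(\ell)},y_j^{(\ell)}$ for $(i,j,\ell)\in[I]\times[J]\times[t+1]$ are sampled uniformly and independently from $\{0,1\}^d$, then $$\Pr\Big[\bigcap_{i\in[I],\,j\in[J],\,\ell\in[t+1]}\big[T_f(x_i^{(\ell)},y_j^{(\ell)},z)=1\big]\Big]\ge\eta^{IJ(t+1)}.$$
   Context: For $f:\{0,1\}^d\to\{0,1\}$ and $x,y,z\in\{0,1\}^d$, $T_f(x,y,z)=\sum_{\emptyset\neq S\subseteq\{x,y,z\}} f\big(\bigoplus_{u\in S}u\big)\bmod 2$ (the sum of $f$ over $x,y,z,x\oplus y,x\oplus z,y\oplus z,x\oplus y\oplus z$), where $\oplus$ is bitwise XOR. *)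

theory Defs
  imports "HOL-Probability.Probability"
begin

text \<open>The cube {0,1}^d, elements represented as boolean lists of length d
  (True = 1, False = 0).\<close>
definition cube :: "nat \<Rightarrow> bool list set" where
  "cube d = {v. length v = d}"

definition bxor :: "bool list \<Rightarrow> bool list \<Rightarrow> bool list" where
  "bxor u v = map2 (\<noteq>) u v"

text \<open>T_f(x,y,z): sum of f over the seven nonempty XOR-combinations, mod 2.
  f : {0,1}^d -> {0,1} is given as a function into nat; only its values on the
  cube matter, and the theorem assumes they lie in {0,1}.\<close>
definition Tf :: "(bool list \<Rightarrow> nat) \<Rightarrow> bool list \<Rightarrow> bool list \<Rightarrow> bool list \<Rightarrow> nat" where
  "Tf f x y z = (f x + f y + f z + f (bxor x y) + f (bxor x z) + f (bxor y z)
                 + f (bxor (bxor x y) z)) mod 2"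

definition eta :: "nat \<Rightarrow> (bool list \<Rightarrow> nat) \<Rightarrow> real" where
  "eta d f = measure_pmf.prob (pmf_of_set (cube d \<times> cube d \<times> cube d))
              {(x, y, z). Tf f x y z = 1}"

end

theory Submission
  imports Defs
begin

text \<open>For fixed z, the event is the intersection over the t+1 independent layers
  of a complete bipartite pattern K_{I,J} between the x_i and the y_j, with edge
  weight g x y = [T_f(x,y,z) = 1]. Averaging out the x_i turns the pattern density
  into the mean of an I-th power of r(y_1..y_J), and the mean of r is a mean of
  J-th powers; Jensen, applied to both powers, bounds the density below by
  q(z)^{IJ}, where q(z) is the edge density. Jensen once more over z gives
  eta^{IJ(t+1)}, since eta is the mean of q(z).\<close>

definition avg :: "'a set \<Rightarrow> ('a \<Rightarrow> real) \<Rightarrow> real" where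
  "avg S h = (\<Sum>s\<in>S. h s) / real (card S)"

lemma avg_nonneg: "(\<And>s. s \<in> S \<Longrightarrow> h s \<ge> 0) \<Longrightarrow> avg S h \<ge> 0"
  unfolding avg_def by (intro divide_nonneg_nonneg sum_nonneg) auto

lemma avg_mono: "(\<And>s. s \<in> S \<Longrightarrow> h s \<le> k s) \<Longrightarrow> avg S h \<le> avg S k"
  unfolding avg_def by (intro divide_right_mono sum_mono) auto

lemma avg_cong: "(\<And>s. s \<in> S \<Longrightarrow> h s = k s) \<Longrightarrow> avg S h = avg S k"
  unfolding avg_def by (metis sum.cong)

lemma avg_swap: "avg A (\<lambda>a. avg B (\<lambda>b. h a b)) = avg B (\<lambda>b. avg A (\<lambda>a. h a b))"
  unfolding avg_def by (simp add: sum_divide_distrib[symmetric] sum.swap[of _ A B])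

lemma avg_Times:
  assumes "finite A" "finite B"
  shows "avg (A \<times> B) h = avg A (\<lambda>a. avg B (\<lambda>b. h (a, b)))"
  unfolding avg_def using assms
  by (simp add: sum.cartesian_product split_def card_cartesian_product
      sum_divide_distrib[symmetric] mult.commute)

lemma avg_PiE_prod:
  assumes "finite K" "\<And>k. k \<in> K \<Longrightarrow> finite (B k)"
  shows "avg (PiE K B) (\<lambda>f. \<Prod>k\<in>K. g k (f k)) = (\<Prod>k\<in>K. avg (B k) (g k))"
  unfolding avg_def using prod_sum_PiE[OF assms, where f = g]
  by (simp add: card_PiE[OF assms(1)] prod_dividef)

lemma avg_reindex_bij_betw:
  assumes "bij_betw \<phi> B A"
  shows "avg A h = avg B (\<lambda>b. h (\<phi> b))"
  unfolding avg_def using sum.reindex_bij_betw[OF assms, of h] bij_betw_same_card[OF assms]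
  by simp

lemma convex_on_power_nonneg: "convex_on {0::real..} (\<lambda>x. x ^ n)"
  by (cases "even n") (use convex_power_even convex_on_subset convex_power_odd in blast)+

lemma avg_power_le:
  assumes "finite S" "S \<noteq> {}" "\<And>s. s \<in> S \<Longrightarrow> h s \<ge> 0"
  shows "avg S h ^ n \<le> avg S (\<lambda>s. h s ^ n)"
proof -
  have "card S > 0" using assms card_gt_0_iff by blast
  then have "(\<Sum>s\<in>S. (1 / real (card S)) *\<^sub>R h s) ^ n \<le> (\<Sum>s\<in>S. (1 / real (card S)) * h s ^ n)"
    using convex_on_sum[OF assms(1,2) convex_on_power_nonneg[of n],
        where a = "\<lambda>_. 1 / real (card S)" and y = h] assms
    by auto
  then show ?thesis unfolding avg_def
    by (simp add: sum_distrib_right[symmetric] sum_distrib_left[symmetric] divide_inverse mult.commute)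
qed

lemma prob_pmf_of_set_eq_avg:
  assumes "finite A" "A \<noteq> {}"
  shows "measure_pmf.prob (pmf_of_set A) E = avg A (\<lambda>x. of_bool (x \<in> E))"
  using measure_pmf_of_set[OF assms(2,1)] assms(1) unfolding avg_def
  by (simp add: Int_def)

lemma prod_of_bool: "finite K \<Longrightarrow> (\<Prod>k\<in>K. of_bool (P k) :: real) = of_bool (\<forall>k\<in>K. P k)"
  by (induction K rule: finite_induct) auto

lemma bij_betw_uncurry_PiE:
  "bij_betw (\<lambda>U. \<lambda>(a, b). if a \<in> A \<and> b \<in> B then U b a else undefined)
     (PiE B (\<lambda>_. PiE A (\<lambda>_. S))) (PiE (A \<times> B) (\<lambda>_. S))"
proof (rule bij_betw_byWitness[where
      f' = "\<lambda>X b. if b \<in> B then (\<lambda>a. if a \<in> A then X (a, b) else undefined) else undefined"])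
qed (auto simp: PiE_iff extensional_def fun_eq_iff split: if_splits)

lemma avg_bipartite_prod_ge:
  fixes g :: "'a \<Rightarrow> 'a \<Rightarrow> real"
  assumes S: "finite S" "S \<noteq> {}" and g: "\<And>x y. g x y \<ge> 0"
    and AB: "finite A" "finite B"
  shows "avg (PiE A (\<lambda>_. S)) (\<lambda>u. avg (PiE B (\<lambda>_. S)) (\<lambda>v. \<Prod>a\<in>A. \<Prod>b\<in>B. g (u a) (v b)))
         \<ge> avg S (\<lambda>x. avg S (g x)) ^ (card A * card B)"
proof -
  define PB where "PB = PiE B (\<lambda>_. S)"
  define q where "q = avg S (\<lambda>x. avg S (g x))"
  define r where "r v = avg S (\<lambda>x. \<Prod>b\<in>B. g x (v b))" for v
  have PB: "finite PB" "PB \<noteq> {}"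
    unfolding PB_def using S AB by (auto simp: finite_PiE PiE_eq_empty_iff)
  have "q \<ge> 0" unfolding q_def using g by (intro avg_nonneg) auto
  have r_nonneg: "r v \<ge> 0" for v unfolding r_def using g by (intro avg_nonneg prod_nonneg) auto
  have avg_r: "avg PB r = avg S (\<lambda>x. avg S (g x) ^ card B)"
    unfolding r_def
    by (subst avg_swap) (use avg_PiE_prod[of B "\<lambda>_. S" "\<lambda>_. g _"] AB S in \<open>simp add: PB_def\<close>)
  have "q ^ card B \<le> avg PB r"
    unfolding avg_r q_def using avg_power_le[OF S, of "\<lambda>x. avg S (g x)"] g by (simp add: avg_nonneg)
  then have "q ^ (card A * card B) \<le> avg PB r ^ card A"
    using \<open>q \<ge> 0\<close> power_mono[of "q ^ card B" "avg PB r" "card A"]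
    by (simp add: power_mult[symmetric] mult.commute)
  also have "\<dots> \<le> avg PB (\<lambda>v. r v ^ card A)"
    using avg_power_le[OF PB] r_nonneg by auto
  also have "\<dots> = avg PB (\<lambda>v. avg (PiE A (\<lambda>_. S)) (\<lambda>u. \<Prod>a\<in>A. \<Prod>b\<in>B. g (u a) (v b)))"
    using avg_PiE_prod[of A "\<lambda>_. S" "\<lambda>_ x. \<Prod>b\<in>B. g x (_ b)"] AB S
    unfolding r_def by (intro avg_cong) simp
  finally show ?thesis unfolding PB_def q_def by (subst avg_swap)
qed

lemma avg_layered_bipartite_prod_ge:
  fixes g :: "'a \<Rightarrow> 'a \<Rightarrow> real"
  assumes S: "finite S" "S \<noteq> {}" and g: "\<And>x y. g x y \<ge> 0"
    and fin: "finite A" "finite B" "finite L"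
  shows "avg (PiE (A \<times> L) (\<lambda>_. S)) (\<lambda>X. avg (PiE (B \<times> L) (\<lambda>_. S))
            (\<lambda>Y. \<Prod>a\<in>A. \<Prod>b\<in>B. \<Prod>l\<in>L. g (X (a, l)) (Y (b, l))))
         \<ge> avg S (\<lambda>x. avg S (g x)) ^ (card A * card B * card L)"
proof -
  define PA where "PA = PiE A (\<lambda>_. S)"
  define PB where "PB = PiE B (\<lambda>_. S)"
  define H where "H u v = (\<Prod>a\<in>A. \<Prod>b\<in>B. g (u a) (v b))" for u v
  define M where "M = avg PA (\<lambda>u. avg PB (H u))"
  have PA: "finite PA" "PA \<noteq> {}" and PB: "finite PB" "PB \<noteq> {}"
    unfolding PA_def PB_def using S fin by (auto simp: finite_PiE PiE_eq_empty_iff)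
  have layers_last: "(\<Prod>a\<in>A. \<Prod>b\<in>B. \<Prod>l\<in>L. F a b l) = (\<Prod>l\<in>L. \<Prod>a\<in>A. \<Prod>b\<in>B. F a b l)"
    for F :: "_ \<Rightarrow> _ \<Rightarrow> _ \<Rightarrow> real"
    by (simp add: prod.swap[of _ B L] prod.swap[of _ A L])
  have "avg (PiE (A \<times> L) (\<lambda>_. S)) (\<lambda>X. avg (PiE (B \<times> L) (\<lambda>_. S))
            (\<lambda>Y. \<Prod>a\<in>A. \<Prod>b\<in>B. \<Prod>l\<in>L. g (X (a, l)) (Y (b, l))))
     = avg (PiE L (\<lambda>_. PA)) (\<lambda>U. avg (PiE L (\<lambda>_. PB)) (\<lambda>V. \<Prod>l\<in>L. H (U l) (V l)))"
    \<comment> \<open>uncurrying X and Y makes the layers independent coordinates\<close>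
    unfolding PA_def PB_def H_def layers_last
    by (subst avg_reindex_bij_betw[OF bij_betw_uncurry_PiE[of A L S]],
        intro avg_cong, subst avg_reindex_bij_betw[OF bij_betw_uncurry_PiE[of B L S]],
        intro avg_cong) (auto simp: PiE_iff)
  also have "\<dots> = avg (PiE L (\<lambda>_. PA)) (\<lambda>U. \<Prod>l\<in>L. avg PB (H (U l)))"
    using avg_PiE_prod[of L "\<lambda>_. PB"] fin PB by (intro avg_cong) simp
  also have "\<dots> = M ^ card L"
    using avg_PiE_prod[of L "\<lambda>_. PA" "\<lambda>_ u. avg PB (H u)"] fin PA by (simp add: M_def)
  finally have "avg (PiE (A \<times> L) (\<lambda>_. S)) (\<lambda>X. avg (PiE (B \<times> L) (\<lambda>_. S))
            (\<lambda>Y. \<Prod>a\<in>A. \<Prod>b\<in>B. \<Prod>l\<in>L. g (X (a, l)) (Y (b, l)))) = M ^ card L" .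
  moreover have "avg S (\<lambda>x. avg S (g x)) ^ (card A * card B) \<le> M"
    unfolding M_def PA_def PB_def H_def by (rule avg_bipartite_prod_ge[OF S g fin(1,2)])
  moreover have "avg S (\<lambda>x. avg S (g x)) \<ge> 0"
    using g by (intro avg_nonneg) auto
  ultimately show ?thesis
    by (simp add: power_mult power_mono)
qed

lemma finite_cube: "finite (cube d)"
  using finite_lists_length_eq[of "UNIV :: bool set" d] by (simp add: cube_def)

lemma cube_nonempty: "cube d \<noteq> {}"
  using length_replicate[of d True] unfolding cube_def by blast

lemma eta_eq_avg_edge_density:
  "eta d f = avg (cube d) (\<lambda>z. avg (cube d) (\<lambda>x. avg (cube d) (\<lambda>y. of_bool (Tf f x y z = 1))))"
proof -
  let ?S = "cube d"
  have "eta d f = avg ?S (\<lambda>x. avg ?S (\<lambda>y. avg ?S (\<lambda>z. of_bool (Tf f x y z = 1))))"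
    unfolding eta_def using finite_cube cube_nonempty
    by (simp add: prob_pmf_of_set_eq_avg avg_Times)
  also have "\<dots> = avg ?S (\<lambda>x. avg ?S (\<lambda>z. avg ?S (\<lambda>y. of_bool (Tf f x y z = 1))))"
    by (intro avg_cong avg_swap)
  also have "\<dots> = avg ?S (\<lambda>z. avg ?S (\<lambda>x. avg ?S (\<lambda>y. of_bool (Tf f x y z = 1))))"
    by (rule avg_swap)
  finally show ?thesis .
qed

theorem claim4p4:
  fixes d I J t :: nat and f :: "bool list \<Rightarrow> nat"
  assumes "\<forall>v \<in> cube d. f v \<in> {0, 1}"
  shows "measure_pmf.prob
           (pmf_of_set (cube d \<times> (PiE ({..<I} \<times> {..<t+1}) (\<lambda>_. cube d))
                               \<times> (PiE ({..<J} \<times> {..<t+1}) (\<lambda>_. cube d))))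
           {(z, X, Y). \<forall>i<I. \<forall>j<J. \<forall>l<t+1. Tf f (X (i, l)) (Y (j, l)) z = 1}
         \<ge> eta d f ^ (I * J * (t + 1))"
proof -
  define S where "S = cube d"
  define G where "G z x y = (of_bool (Tf f x y z = 1) :: real)" for z x y
  define E where "E = {(z, X, Y). \<forall>i<I. \<forall>j<J. \<forall>l<t+1. Tf f (X (i, l)) (Y (j, l)) z = 1}"
  define q where "q z = avg S (\<lambda>x. avg S (G z x))" for z
  have S: "finite S" "S \<noteq> {}" unfolding S_def by (simp_all add: finite_cube cube_nonempty)
  have q_nonneg: "q z \<ge> 0" for z unfolding q_def G_def by (intro avg_nonneg) simp
  have "eta d f ^ (I * J * (t + 1)) = avg S q ^ (I * J * (t + 1))"
    unfolding eta_eq_avg_edge_density q_def G_def S_def ..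
  also have "\<dots> \<le> avg S (\<lambda>z. q z ^ (card {..<I} * card {..<J} * card {..<t+1}))"
    using avg_power_le[OF S, of q "I * J * (t + 1)"] q_nonneg by simp
  also have "\<dots> \<le> avg S (\<lambda>z. avg (PiE ({..<I} \<times> {..<t+1}) (\<lambda>_. S))
      (\<lambda>X. avg (PiE ({..<J} \<times> {..<t+1}) (\<lambda>_. S))
        (\<lambda>Y. \<Prod>i<I. \<Prod>j<J. \<Prod>l<t+1. G z (X (i, l)) (Y (j, l)))))"
    unfolding q_def by (intro avg_mono avg_layered_bipartite_prod_ge[OF S]) (simp_all add: G_def)
  also have "\<dots> = avg S (\<lambda>z. avg (PiE ({..<I} \<times> {..<t+1}) (\<lambda>_. S))
      (\<lambda>X. avg (PiE ({..<J} \<times> {..<t+1}) (\<lambda>_. S))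
        (\<lambda>Y. of_bool ((z, X, Y) \<in> E))))"
    unfolding E_def G_def by (intro avg_cong) (simp only: prod_of_bool finite_lessThan, auto)
  also have "\<dots> = measure_pmf.prob
           (pmf_of_set (S \<times> (PiE ({..<I} \<times> {..<t+1}) (\<lambda>_. S)) \<times> (PiE ({..<J} \<times> {..<t+1}) (\<lambda>_. S)))) E"
    using S by (simp add: prob_pmf_of_set_eq_avg avg_Times finite_PiE PiE_eq_empty_iff)
  finally show ?thesis unfolding S_def E_def .
qed

end
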